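(* Let $\Delta\ge 4$ and $n\ge \Delta+2$ be integers. Consider the linear program in the real variables $m_{i,j}$, $1\le i\le j\le \Delta$: \[ \max \sum_{1\le i\le j\le \Delta} (i-j)^2\, m_{i,j} \] subject to \[ \sum_{1\le i\le j\le \Delta} \Bigl(\frac{1}{i}+\frac{1}{j}\Bigr) m_{i,j} = n,\qquad \sum_{1\le i\le j\le \Delta} m_{i,j} = n-1,\qquad m_{i,j}\ge 0 \ \text{ for all } 1\le i\le j\le \Delta. \] Then this problem admits a unique optimal solution, namely \[ m_{1,\Delta}=\frac{(\Delta-2)n+(\Delta+2)}{\Delta},\qquad m_{2,\Delta}=\frac{2(n-\Delta-1)}{\Delta}, \] and $m_{i,j}=0$ for all $(i,j)\notin\{(1,\Delta),(2,\Delta)\}$.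
   Context: This linear program is the relaxation of maximizing the $\sigma$-irregularity $\sigma(T)=\sum_{uv\in E(T)}(d(u)-d(v))^2$ over trees $T$ of order $n$ and maximum degree $\Delta$, where $m_{i,j}$ stands for the number of edges joining a vertex of degree $i$ to a vertex of degree $j$. *)

theory Defs
  imports Complex_Main
begin

text \<open>Index set of the LP variables m_{i,j}, 1 <= i <= j <= D.
  A point of the LP is a function m :: nat => nat => real; only its values on
  the index set matter.\<close>

definition idx :: "nat \<Rightarrow> (nat \<times> nat) set" where
  "idx D = {(i, j). 1 \<le> i \<and> i \<le> j \<and> j \<le> D}"

definition lp_obj :: "nat \<Rightarrow> (nat \<Rightarrow> nat \<Rightarrow> real) \<Rightarrow> real" where
  "lp_obj D m = (\<Sum>(i, j)\<in>idx D. (real i - real j)^2 * m i j)"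

definition lp_feasible :: "nat \<Rightarrow> nat \<Rightarrow> (nat \<Rightarrow> nat \<Rightarrow> real) \<Rightarrow> bool" where
  "lp_feasible D n m \<longleftrightarrow>
     (\<Sum>(i, j)\<in>idx D. (1 / real i + 1 / real j) * m i j) = real n \<and>
     (\<Sum>(i, j)\<in>idx D. m i j) = real n - 1 \<and>
     (\<forall>(i, j)\<in>idx D. m i j \<ge> 0)"

definition lp_optimal :: "nat \<Rightarrow> nat \<Rightarrow> (nat \<Rightarrow> nat \<Rightarrow> real) \<Rightarrow> bool" where
  "lp_optimal D n m \<longleftrightarrow> lp_feasible D n m \<and>
     (\<forall>m'. lp_feasible D n m' \<longrightarrow> lp_obj D m' \<le> lp_obj D m)"

end

theory Submission
  imports Defs
begin

text \<open>LP duality. Take the multipliers \<open>a = 4D - 6\<close> for the first constraint and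
  \<open>b = (D - 1)\<^sup>2 - a (D + 1) / D\<close> for the second, the unique ones making the reduced
  costs \<open>a (1/i + 1/j) + b - (i - j)\<^sup>2\<close> of \<open>(1, D)\<close> and \<open>(2, D)\<close> vanish. All other
  reduced costs are positive, so every feasible point has objective at most
  \<open>a n + b (n - 1)\<close>, with equality iff it is supported on \<open>{(1, D), (2, D)}\<close>. On these two
  variables the equality constraints have a unique solution, nonnegative as \<open>n \<ge> D + 2\<close>.\<close>

definition dual_a :: "nat \<Rightarrow> real" where
  "dual_a D = 4 * real D - 6"

definition dual_b :: "nat \<Rightarrow> real" where
  "dual_b D = (real D - 1)^2 - dual_a D * (real D + 1) / real D"

definition dual_value :: "nat \<Rightarrow> nat \<Rightarrow> real" where
  "dual_value D n = dual_a D * real n + dual_b D * (real n - 1)"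

definition reduced_cost :: "nat \<Rightarrow> nat \<Rightarrow> nat \<Rightarrow> real" where
  "reduced_cost D i j = dual_a D * (1 / real i + 1 / real j) + dual_b D - (real i - real j)^2"

definition opt_basis :: "nat \<Rightarrow> (nat \<times> nat) set" where
  "opt_basis D = {(1, D), (2, D)}"

definition basic_solution :: "nat \<Rightarrow> nat \<Rightarrow> nat \<Rightarrow> nat \<Rightarrow> real" where
  "basic_solution D n i j =
     (if (i, j) = (1, D) then ((real D - 2) * real n + (real D + 2)) / real D
      else if (i, j) = (2, D) then 2 * (real n - real D - 1) / real D
      else 0)"

lemma reduced_cost_ge_last_column:
  assumes "1 \<le> i" "i \<le> j" "j \<le> D" "D \<ge> 4"
  shows "reduced_cost D i D \<le> reduced_cost D i j"
    and "j < D \<Longrightarrow> reduced_cost D i D < reduced_cost D i j"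
proof -
  have pos: "real j > 0" "real D > 0" using assms by auto
  have diff: "reduced_cost D i j - reduced_cost D i D =
      (real D - real j) * (dual_a D / (real j * real D) + (real D + real j - 2 * real i))"
    unfolding reduced_cost_def using pos by (simp add: field_simps power2_eq_square)
  have "dual_a D / (real j * real D) > 0" unfolding dual_a_def using assms pos by simp
  moreover have "real D + real j - 2 * real i \<ge> 0" using assms by simp
  ultimately have factor: "dual_a D / (real j * real D) + (real D + real j - 2 * real i) > 0"
    by linarith
  show "reduced_cost D i D \<le> reduced_cost D i j"
    using diff mult_nonneg_nonneg[of "real D - real j", OF _ less_imp_le[OF factor]] assms(3)
    by simp
  show "reduced_cost D i D < reduced_cost D i j" if "j < D"
  proof -
    have "real D - real j > 0" using that by simp
    from mult_pos_pos[OF this factor] show ?thesis using diff by simp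
  qed
qed

lemma reduced_cost_1_last: "D \<ge> 4 \<Longrightarrow> reduced_cost D 1 D = 0"
  unfolding reduced_cost_def dual_b_def by (simp add: field_simps power2_eq_square)

lemma reduced_cost_2_last: "D \<ge> 4 \<Longrightarrow> reduced_cost D 2 D = 0"
  unfolding reduced_cost_def dual_b_def dual_a_def by (simp add: field_simps power2_eq_square)

lemma reduced_cost_last_column_pos:
  assumes "3 \<le> i" "i \<le> D" "D \<ge> 4"
  shows "reduced_cost D i D > 0"
proof -
  have pos: "real i > 0" "real D > 0" using assms by auto
  have diff: "reduced_cost D i D - reduced_cost D 2 D =
      (real i - 2) * ((2 * real D - 2 - real i) - dual_a D / (2 * real i))"
    unfolding reduced_cost_def using pos by (simp add: field_simps power2_eq_square)
  have "real i * (2 * real D - 2 - real i) - (2 * real D - 3) =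
      (real i - 3) * (real D - real i) + real i * (real D - 5) + real D + 3"
    by (simp add: algebra_simps)
  moreover have "(real i - 3) * (real D - real i) \<ge> 0" using assms by simp
  moreover have "real i * (real D - 5) + real D + 3 > 0"
  proof (cases "D \<ge> 5")
    case True
    then show ?thesis using pos by (simp add: add_nonneg_pos)
  next
    case False
    with assms have "D = 4" by simp
    with assms show ?thesis by simp
  qed
  ultimately have "real i * (2 * real D - 2 - real i) > 2 * real D - 3" by linarith
  then have "dual_a D / (2 * real i) < 2 * real D - 2 - real i"
    unfolding dual_a_def using pos by (simp add: field_simps)
  moreover have "real i - 2 > 0" using assms(1) by simp
  ultimately show ?thesis using diff reduced_cost_2_last[OF assms(3)] by simp
qed

lemma reduced_cost_nonneg:
  assumes "(i, j) \<in> idx D" "D \<ge> 4"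
  shows "reduced_cost D i j \<ge> 0"
proof -
  have ij: "1 \<le> i" "i \<le> j" "j \<le> D" using assms(1) unfolding idx_def by auto
  have "reduced_cost D i D \<ge> 0"
  proof (cases "i \<ge> 3")
    case True
    then show ?thesis using reduced_cost_last_column_pos[of i D] ij assms(2) by simp
  next
    case False
    then have "i = 1 \<or> i = 2" using ij by auto
    then show ?thesis using reduced_cost_1_last reduced_cost_2_last assms(2) by auto
  qed
  then show ?thesis using reduced_cost_ge_last_column(1)[OF ij assms(2)] by simp
qed

lemma reduced_cost_pos:
  assumes "(i, j) \<in> idx D - opt_basis D" "D \<ge> 4"
  shows "reduced_cost D i j > 0"
proof (cases "j < D")
  case True
  have ij: "1 \<le> i" "i \<le> j" "j \<le> D" using assms(1) unfolding idx_def by auto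
  then have "reduced_cost D i D \<ge> 0" using reduced_cost_nonneg[of i D D] assms(2)
    unfolding idx_def by auto
  then show ?thesis using reduced_cost_ge_last_column(2)[OF ij assms(2) True] by simp
next
  case False
  with assms(1) have "j = D" "3 \<le> i" "i \<le> D" unfolding idx_def opt_basis_def by auto
  then show ?thesis using reduced_cost_last_column_pos assms(2) by simp
qed

lemma finite_idx: "finite (idx D)"
  by (rule finite_subset[of _ "{1..D} \<times> {1..D}"]) (auto simp: idx_def)

lemma opt_basis_subset_idx: "D \<ge> 2 \<Longrightarrow> opt_basis D \<subseteq> idx D"
  unfolding opt_basis_def idx_def by auto

lemma lp_obj_eq_dual_value_minus_reduced_costs:
  assumes "lp_feasible D n m"
  shows "lp_obj D m = dual_value D n - (\<Sum>(i, j)\<in>idx D. reduced_cost D i j * m i j)"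
proof -
  have "(\<Sum>(i, j)\<in>idx D. reduced_cost D i j * m i j) =
      (\<Sum>(i, j)\<in>idx D. dual_a D * ((1 / real i + 1 / real j) * m i j) + dual_b D * m i j
                        - (real i - real j)^2 * m i j)"
    by (rule sum.cong) (auto simp: reduced_cost_def algebra_simps)
  also have "\<dots> = dual_a D * (\<Sum>(i, j)\<in>idx D. (1 / real i + 1 / real j) * m i j)
      + dual_b D * (\<Sum>(i, j)\<in>idx D. m i j) - lp_obj D m"
    unfolding lp_obj_def
    by (simp add: sum.distrib sum_subtractf sum_distrib_left case_prod_unfold)
  finally show ?thesis
    using assms unfolding lp_feasible_def dual_value_def by simp
qed

lemma reduced_cost_sum_nonneg:
  assumes "lp_feasible D n m" "D \<ge> 4"
  shows "(\<Sum>(i, j)\<in>idx D. reduced_cost D i j * m i j) \<ge> 0"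
  using assms reduced_cost_nonneg unfolding lp_feasible_def by (intro sum_nonneg) auto

lemma lp_obj_le_dual_value:
  "lp_feasible D n m \<Longrightarrow> D \<ge> 4 \<Longrightarrow> lp_obj D m \<le> dual_value D n"
  using lp_obj_eq_dual_value_minus_reduced_costs reduced_cost_sum_nonneg by fastforce

lemma sum_idx_supported_on_opt_basis:
  assumes "D \<ge> 2" "\<forall>(i, j)\<in>idx D - opt_basis D. f i j = 0"
  shows "(\<Sum>(i, j)\<in>idx D. f i j) = f 1 D + f 2 D"
proof -
  have "(\<Sum>(i, j)\<in>idx D. f i j) = (\<Sum>(i, j)\<in>opt_basis D. f i j)"
    using assms by (intro sum.mono_neutral_right finite_idx opt_basis_subset_idx) auto
  then show ?thesis using assms(1) by (simp add: opt_basis_def)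
qed

lemma lp_obj_eq_dual_value_iff:
  assumes "lp_feasible D n m" "D \<ge> 4"
  shows "lp_obj D m = dual_value D n \<longleftrightarrow> (\<forall>(i, j)\<in>idx D - opt_basis D. m i j = 0)"
proof -
  let ?r = "\<lambda>(i, j). reduced_cost D i j * m i j"
  have nonneg: "?r x \<ge> 0" if "x \<in> idx D" for x
    using that assms reduced_cost_nonneg unfolding lp_feasible_def by auto
  have "lp_obj D m = dual_value D n \<longleftrightarrow> (\<forall>x\<in>idx D. ?r x = 0)"
    using lp_obj_eq_dual_value_minus_reduced_costs[OF assms(1)]
      sum_nonneg_eq_0_iff[OF finite_idx nonneg] by auto
  also have "\<dots> \<longleftrightarrow> (\<forall>(i, j)\<in>idx D - opt_basis D. m i j = 0)"
    using reduced_cost_pos[OF _ assms(2)] reduced_cost_1_last[OF assms(2)]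
      reduced_cost_2_last[OF assms(2)]
    by (fastforce simp: opt_basis_def)
  finally show ?thesis .
qed

lemma basic_equations_iff:
  fixes d nn x y :: real
  assumes "d > 0"
  shows "(1 + 1 / d) * x + (1 / 2 + 1 / d) * y = nn \<and> x + y = nn - 1 \<longleftrightarrow>
        x = ((d - 2) * nn + (d + 2)) / d \<and> y = 2 * (nn - d - 1) / d"
proof
  assume h: "(1 + 1 / d) * x + (1 / 2 + 1 / d) * y = nn \<and> x + y = nn - 1"
  have "(1 + 1 / d) * x + (1 / 2 + 1 / d) * y = x / 2 + (1 / 2 + 1 / d) * (x + y)"
    by (simp add: distrib_left distrib_right)
  with h have "x / 2 + (1 / 2 + 1 / d) * (nn - 1) = nn" by metis
  then have "x = 2 * nn - 2 * ((1 / 2 + 1 / d) * (nn - 1))" by linarith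
  also have "\<dots> = ((d - 2) * nn + (d + 2)) / d" using assms by (simp add: field_simps)
  finally have x: "x = ((d - 2) * nn + (d + 2)) / d" .
  have "y = nn - 1 - x" using h by simp
  also have "\<dots> = 2 * (nn - d - 1) / d" using x assms by (simp add: field_simps)
  finally show "x = ((d - 2) * nn + (d + 2)) / d \<and> y = 2 * (nn - d - 1) / d"
    using x by simp
next
  assume "x = ((d - 2) * nn + (d + 2)) / d \<and> y = 2 * (nn - d - 1) / d"
  moreover have "(1 + 1 / d) * (((d - 2) * nn + (d + 2)) / d)
      + (1 / 2 + 1 / d) * (2 * (nn - d - 1) / d) = nn"
    using assms by (simp add: field_simps)
  moreover have "((d - 2) * nn + (d + 2)) / d + 2 * (nn - d - 1) / d = nn - 1"
    using assms by (simp add: field_simps)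
  ultimately show "(1 + 1 / d) * x + (1 / 2 + 1 / d) * y = nn \<and> x + y = nn - 1"
    by simp
qed

lemma lp_feasible_on_opt_basis_iff:
  assumes "D \<ge> 4" "n \<ge> D + 2" "\<forall>(i, j)\<in>idx D - opt_basis D. m i j = 0"
  shows "lp_feasible D n m \<longleftrightarrow>
    m 1 D = basic_solution D n 1 D \<and> m 2 D = basic_solution D n 2 D"
proof -
  have D: "real D > 0" "D \<ge> 2" using assms(1) by auto
  have constr1: "(\<Sum>(i, j)\<in>idx D. (1 / real i + 1 / real j) * m i j) =
      (1 + 1 / real D) * m 1 D + (1 / 2 + 1 / real D) * m 2 D"
    using assms(3)
      sum_idx_supported_on_opt_basis[OF D(2), of "\<lambda>i j. (1 / real i + 1 / real j) * m i j"]
    by auto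
  have constr2: "(\<Sum>(i, j)\<in>idx D. m i j) = m 1 D + m 2 D"
    using sum_idx_supported_on_opt_basis[OF D(2), of m] assms(3) by auto
  have nonneg: "(\<forall>(i, j)\<in>idx D. m i j \<ge> 0) \<longleftrightarrow> m 1 D \<ge> 0 \<and> m 2 D \<ge> 0"
  proof
    assume "\<forall>(i, j)\<in>idx D. m i j \<ge> 0"
    then show "m 1 D \<ge> 0 \<and> m 2 D \<ge> 0"
      using opt_basis_subset_idx[OF D(2)] by (auto simp: opt_basis_def)
  next
    assume basic: "m 1 D \<ge> 0 \<and> m 2 D \<ge> 0"
    show "\<forall>(i, j)\<in>idx D. m i j \<ge> 0"
    proof clarify
      fix i j assume ij: "(i, j) \<in> idx D"
      show "m i j \<ge> 0"
      proof (cases "(i, j) \<in> opt_basis D")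
        case True
        then show ?thesis using basic by (auto simp: opt_basis_def)
      next
        case False
        then show ?thesis using bspec[OF assms(3), of "(i, j)"] ij by simp
      qed
    qed
  qed
  have basic_1: "basic_solution D n 1 D = ((real D - 2) * real n + (real D + 2)) / real D"
    by (simp add: basic_solution_def)
  have basic_2: "basic_solution D n 2 D = 2 * (real n - real D - 1) / real D"
    using D(2) by (simp add: basic_solution_def)
  have "basic_solution D n 1 D \<ge> 0" "basic_solution D n 2 D \<ge> 0"
    unfolding basic_1 basic_2 using assms(1,2) by auto
  moreover have "(1 + 1 / real D) * m 1 D + (1 / 2 + 1 / real D) * m 2 D = real n \<and>
      m 1 D + m 2 D = real n - 1 \<longleftrightarrow>
      m 1 D = basic_solution D n 1 D \<and> m 2 D = basic_solution D n 2 D"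
    unfolding basic_1 basic_2 by (rule basic_equations_iff[OF D(1)])
  ultimately show ?thesis
    unfolding lp_feasible_def constr1 constr2 nonneg by auto
qed

lemma basic_solution_opt_basis_support:
  "\<forall>(i, j)\<in>idx D - opt_basis D. basic_solution D n i j = 0"
  by (auto simp: basic_solution_def opt_basis_def)

lemma eq_basic_solution_on_idx_iff:
  assumes "D \<ge> 2"
  shows "(\<forall>(i, j)\<in>idx D. m i j = basic_solution D n i j) \<longleftrightarrow>
    (\<forall>(i, j)\<in>idx D - opt_basis D. m i j = 0) \<and>
    m 1 D = basic_solution D n 1 D \<and> m 2 D = basic_solution D n 2 D"
proof
  assume "\<forall>(i, j)\<in>idx D. m i j = basic_solution D n i j"
  then show "(\<forall>(i, j)\<in>idx D - opt_basis D. m i j = 0) \<and>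
      m 1 D = basic_solution D n 1 D \<and> m 2 D = basic_solution D n 2 D"
    using basic_solution_opt_basis_support[of D n] opt_basis_subset_idx[OF assms]
    by (fastforce simp: opt_basis_def)
next
  assume off: "(\<forall>(i, j)\<in>idx D - opt_basis D. m i j = 0) \<and>
      m 1 D = basic_solution D n 1 D \<and> m 2 D = basic_solution D n 2 D"
  show "\<forall>(i, j)\<in>idx D. m i j = basic_solution D n i j"
  proof clarify
    fix i j assume ij: "(i, j) \<in> idx D"
    show "m i j = basic_solution D n i j"
    proof (cases "(i, j) \<in> opt_basis D")
      case True
      then show ?thesis using off by (auto simp: opt_basis_def)
    next
      case False
      then show ?thesis
        using off bspec[OF basic_solution_opt_basis_support, of "(i, j)" D n] ij by auto
    qed
  qed
qed

lemma lp_optimal_iff_obj_eq_dual_value: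
  assumes "D \<ge> 4" "n \<ge> D + 2"
  shows "lp_optimal D n m \<longleftrightarrow> lp_feasible D n m \<and> lp_obj D m = dual_value D n"
proof -
  have feasible: "lp_feasible D n (basic_solution D n)"
    using lp_feasible_on_opt_basis_iff[OF assms basic_solution_opt_basis_support] by simp
  then have "lp_obj D (basic_solution D n) = dual_value D n"
    using lp_obj_eq_dual_value_iff[OF _ assms(1)] basic_solution_opt_basis_support by blast
  then show ?thesis
    using feasible lp_obj_le_dual_value[OF _ assms(1)] unfolding lp_optimal_def
    by (metis order_antisym)
qed

theorem theorem3p2:
  fixes D n :: nat
  assumes "D \<ge> 4" and "n \<ge> D + 2"
  shows "\<forall>m. lp_optimal D n m \<longleftrightarrow>
           (\<forall>(i, j)\<in>idx D. m i j =
              (if (i, j) = (1, D) then ((real D - 2) * real n + (real D + 2)) / real D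
               else if (i, j) = (2, D) then 2 * (real n - real D - 1) / real D
               else 0))"
proof
  fix m :: "nat \<Rightarrow> nat \<Rightarrow> real"
  have "lp_optimal D n m \<longleftrightarrow>
      lp_feasible D n m \<and> (\<forall>(i, j)\<in>idx D - opt_basis D. m i j = 0)"
    using lp_optimal_iff_obj_eq_dual_value[OF assms] lp_obj_eq_dual_value_iff[OF _ assms(1)]
    by blast
  also have "\<dots> \<longleftrightarrow> (\<forall>(i, j)\<in>idx D - opt_basis D. m i j = 0) \<and>
      m 1 D = basic_solution D n 1 D \<and> m 2 D = basic_solution D n 2 D"
    using lp_feasible_on_opt_basis_iff[OF assms] by blast
  also have "\<dots> \<longleftrightarrow> (\<forall>(i, j)\<in>idx D. m i j = basic_solution D n i j)"
    using eq_basic_solution_on_idx_iff assms(1) by simp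
  finally show "lp_optimal D n m \<longleftrightarrow>
           (\<forall>(i, j)\<in>idx D. m i j =
              (if (i, j) = (1, D) then ((real D - 2) * real n + (real D + 2)) / real D
               else if (i, j) = (2, D) then 2 * (real n - real D - 1) / real D
               else 0))"
    unfolding basic_solution_def .
qed

end
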